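(* Let $\mu\in\mathcal P_2(\mathbb R^d)$, $\psi\in T_\mu(\mathcal P_2(\mathbb R^d))$ and $\eta\in\mathcal P(C([0,1],\mathbb R^d))$ with $(e_0)_\#\eta=\mu$. Then there exists a parallel transport of $\psi$ along $\eta$.
   Context: $\mathcal P(O)$ denotes Borel probability measures on $O$; $\mathcal P_2(\mathbb R^d)$ those on $\mathbb R^d$ with finite second moment; $f_\#m$ is the image measure. $T_\mu(\mathcal P_2(\mathbb R^d))$ is the set of measurable maps $\psi:\mathbb R^d\to\mathcal P(\mathbb R^d)$, $x\mapsto\psi_x$, with $\int\int|z|^2\psi_x(dz)\mu(dx)<\infty$; such $\psi$ is identified with the measure $\mu(dx)\psi_x(dz)$ on $\mathbb R^{2d}$. For $t\in[0,1]$, $e_t$ is the evaluation map $w\mapsto w(t)$ on spaces of continuous curves. $\pi_1,\pi_2$ are the projections of $\mathbb R^d\times\mathbb R^d$. Let $p_1:C([0,1],\mathbb R^{2d})\to C([0,1],\mathbb R^d)$, $p_1(w)(t)=\pi_1(w(t))$; let $C^1_y([0,1],\mathbb R^{2d})$ be the set of continuous curves $w$ with $t\mapsto\pi_2(w(t))$ of class $C^1$, and on it $\partial_2(w)(t)=\frac{d}{dt}\pi_2(w(t))$. A parallel transport of $\psi\in T_\mu(\mathcal P_2(\mathbb R^d))$ along $\eta$ (with $(e_0)_\#\eta=\mu$) is a probability measure $\Psi$ on $C([0,1],\mathbb R^{2d})$ concentrated on $C^1_y([0,1],\mathbb R^{2d})$ such that $(p_1)_\#\Psi=\eta$, $(\partial_2)_\#\Psi=\delta_0$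 (Dirac mass at the zero curve), and $(e_0)_\#\Psi(dx,dz)=\mu(dx)\psi_x(dz)$. *)

theory Defs
  imports "HOL-Analysis.Analysis" "HOL-Probability.Probability"
begin

(* R^d is modelled by an arbitrary Euclidean space 'a, R^{2d} by 'a <times> 'a.
  C([0,1],X) is modelled inside the metric space of bounded continuous functions
  real <Rightarrow><^sub>C X (sup norm) as the closed subset of those functions that are constant
  outside [0,1]; this subset is isometric to C([0,1],X) with the uniform metric. *)

definition curves01 :: "(real \<Rightarrow>\<^sub>C 'b::metric_space) set" where
  "curves01 = {w. \<forall>t. apply_bcontfun w t = apply_bcontfun w (max 0 (min 1 t))}"

definition P2 :: "'a::euclidean_space measure \<Rightarrow> bool" where
  "P2 \<mu> \<longleftrightarrow> prob_space \<mu> \<and> sets \<mu> = sets borel \<and>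
     (\<integral>\<^sup>+ x. ennreal ((norm x)\<^sup>2) \<partial>\<mu>) < \<infinity>"

definition tangent :: "'a::euclidean_space measure \<Rightarrow> ('a \<Rightarrow> 'a measure) \<Rightarrow> bool" where
  "tangent \<mu> \<psi> \<longleftrightarrow> \<psi> \<in> borel \<rightarrow>\<^sub>M prob_algebra borel \<and>
     (\<integral>\<^sup>+ x. (\<integral>\<^sup>+ z. ennreal ((norm z)\<^sup>2) \<partial>(\<psi> x)) \<partial>\<mu>) < \<infinity>"

definition joint :: "'a::euclidean_space measure \<Rightarrow> ('a \<Rightarrow> 'a measure) \<Rightarrow> ('a \<times> 'a) measure" where
  "joint \<mu> \<psi> = \<mu> \<bind> (\<lambda>x. distr (\<psi> x) borel (\<lambda>z. (x, z)))"

definition ev :: "real \<Rightarrow> (real \<Rightarrow>\<^sub>C 'b::metric_space) \<Rightarrow> 'b" where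
  "ev t w = apply_bcontfun w t"

definition p1 :: "(real \<Rightarrow>\<^sub>C ('a::euclidean_space \<times> 'a)) \<Rightarrow> (real \<Rightarrow>\<^sub>C 'a)" where
  "p1 w = Bcontfun (\<lambda>t. fst (apply_bcontfun w t))"

definition C1y :: "(real \<Rightarrow>\<^sub>C ('a::euclidean_space \<times> 'a)) set" where
  "C1y = {w. w \<in> curves01 \<and> (\<exists>v. continuous_on {0..1} v \<and>
       (\<forall>t\<in>{0..1}. ((\<lambda>s. snd (apply_bcontfun w s)) has_vector_derivative v t) (at t within {0..1})))}"

definition D2 :: "(real \<Rightarrow>\<^sub>C ('a::euclidean_space \<times> 'a)) \<Rightarrow> real \<Rightarrow> 'a" where
  "D2 w t = vector_derivative (\<lambda>s. snd (apply_bcontfun w s)) (at t within {0..1})"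

definition parallel_transport ::
  "'a::euclidean_space measure \<Rightarrow> ('a \<Rightarrow> 'a measure) \<Rightarrow> (real \<Rightarrow>\<^sub>C 'a) measure
    \<Rightarrow> (real \<Rightarrow>\<^sub>C ('a \<times> 'a)) measure \<Rightarrow> bool" where
  "parallel_transport \<mu> \<psi> \<eta> \<Psi> \<longleftrightarrow>
     prob_space \<Psi> \<and> sets \<Psi> = sets borel \<and>
     (AE w in \<Psi>. w \<in> C1y) \<and>
     distr \<Psi> borel p1 = \<eta> \<and>
     (AE w in \<Psi>. \<forall>t\<in>{0..1}. D2 w t = 0) \<and>
     distr \<Psi> borel (ev 0) = joint \<mu> \<psi>"

end

theory Submission
  imports Defs
begin

(* Freeze the second component. Let Q be the law of (w, z) where w ~ eta and, given w,
  z ~ psi_(w 0). Push Q forward along (w, z) |-> (t |-> (w t, z)): the first marginal is eta,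
  the initial law is mu(dx) psi_x(dz) because (e_0)_# eta = mu, and every second component is
  constant in time, hence C^1 with zero derivative. *)

definition lift_const ::
    "('t::topological_space \<Rightarrow>\<^sub>C 'a::metric_space) \<Rightarrow> 'b::metric_space \<Rightarrow> ('t \<Rightarrow>\<^sub>C ('a \<times> 'b))"
  where "lift_const w z = Bcontfun (\<lambda>t. (w t, z))"

lemma pair_const_in_bcontfun: "(\<lambda>t. (apply_bcontfun w t, z)) \<in> bcontfun"
proof -
  have "bounded (range (apply_bcontfun w) \<times> {z})"
    by (intro bounded_Times bounded_apply_bcontfun finite_imp_bounded) simp
  moreover have "range (\<lambda>t. (apply_bcontfun w t, z)) \<subseteq> range (apply_bcontfun w) \<times> {z}" by auto
  ultimately show ?thesis
    unfolding bcontfun_def by (auto intro!: continuous_intros dest: bounded_subset)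
qed

lemma apply_lift_const [simp]: "lift_const w z t = (w t, z)"
  unfolding lift_const_def by (simp add: Bcontfun_inverse[OF pair_const_in_bcontfun])

lemma dist_lift_const_le: "dist (lift_const w z) (lift_const w' z') \<le> dist (w, z) (w', z')"
proof (rule dist_bound)
  fix t
  have "dist (w t) (w' t) \<le> dist w w'" by (rule dist_bounded)
  then show "dist (lift_const w z t) (lift_const w' z' t) \<le> dist (w, z) (w', z')"
    by (simp add: dist_Pair_Pair power_mono)
qed

lemma continuous_on_lift_const: "continuous_on UNIV (case_prod lift_const)"
  by (rule lipschitz_on_continuous_on[where L=1])
    (auto intro!: lipschitz_onI simp: dist_lift_const_le)

lemma lift_const_in_curves01_iff [simp]: "lift_const w z \<in> curves01 \<longleftrightarrow> w \<in> curves01"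
  by (simp add: curves01_def)

lemma apply_p1 [simp]: "p1 w t = fst (w t)"
proof -
  have "bounded (fst ` range (apply_bcontfun w))"
    by (rule bounded_linear_image[OF bounded_apply_bcontfun bounded_linear_fst])
  then have "(\<lambda>t. fst (w t)) \<in> bcontfun"
    unfolding bcontfun_def by (auto intro!: continuous_intros simp: image_image)
  then show ?thesis
    unfolding p1_def by (simp add: Bcontfun_inverse)
qed

lemma dist_p1_le: "dist (p1 w) (p1 w') \<le> dist w w'"
proof (rule dist_bound)
  fix t
  have "dist (fst (w t)) (fst (w' t)) \<le> dist (w t) (w' t)" by (rule dist_fst_le)
  also have "\<dots> \<le> dist w w'" by (rule dist_bounded)
  finally show "dist (p1 w t) (p1 w' t) \<le> dist w w'" by simp
qed

lemma continuous_on_p1: "continuous_on UNIV p1"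
  by (rule lipschitz_on_continuous_on[where L=1])
    (auto intro!: lipschitz_onI simp: dist_p1_le)

lemma p1_lift_const [simp]: "p1 (lift_const w z) = w"
  by (rule bcontfun_eqI) simp

lemma continuous_on_ev: "continuous_on UNIV (ev t)"
  by (rule lipschitz_on_continuous_on[where L=1])
    (auto intro!: lipschitz_onI simp: ev_def dist_bounded)

lemma ev_lift_const [simp]: "ev t (lift_const w z) = (ev t w, z)"
  by (simp add: ev_def)

lemma closed_curves01: "closed (curves01 :: (real \<Rightarrow>\<^sub>C 'a::metric_space) set)"
proof -
  have eq: "(curves01 :: (real \<Rightarrow>\<^sub>C 'a) set) = (\<Inter>t. {w. ev t w = ev (max 0 (min 1 t)) w})"
    by (auto simp: curves01_def ev_def)
  show ?thesis
    unfolding eq by (intro closed_INT ballI closed_Collect_eq continuous_on_ev)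
qed

lemma closed_snd_const:
  "closed {w :: real \<Rightarrow>\<^sub>C ('a::metric_space \<times> 'b::metric_space). \<forall>t. snd (w t) = snd (w 0)}"
proof -
  have eq: "{w :: real \<Rightarrow>\<^sub>C ('a \<times> 'b). \<forall>t. snd (w t) = snd (w 0)}
      = (\<Inter>t. {w. snd (ev t w) = snd (ev 0 w)})"
    by (auto simp: ev_def)
  show ?thesis
    unfolding eq by (intro closed_INT ballI closed_Collect_eq continuous_on_snd continuous_on_ev)
qed

lemma snd_const_imp_C1y_D2_zero:
  fixes w :: "real \<Rightarrow>\<^sub>C ('a::euclidean_space \<times> 'a)"
  assumes "w \<in> curves01" and "\<forall>t. snd (w t) = snd (w 0)"
  shows "w \<in> C1y" and "\<forall>t\<in>{0..1}. D2 w t = 0"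
proof -
  have snd_w: "(\<lambda>s. snd (w s)) = (\<lambda>s. snd (w 0))"
    using assms(2) by auto
  have deriv: "((\<lambda>s. snd (w s)) has_vector_derivative 0) (at t within {0..1})" for t
    unfolding snd_w by (rule has_vector_derivative_const)
  show "w \<in> C1y"
    unfolding C1y_def using assms(1) deriv by (auto intro!: exI[of _ "\<lambda>_. 0"])
  show "\<forall>t\<in>{0..1}. D2 w t = 0"
    using vector_derivative_within_cbox[OF _ _ deriv[folded cbox_interval]]
    by (simp add: D2_def cbox_interval)
qed

(* Only the second factor has to be second countable: the curves, with the sup metric, are not,
  so borel_prod does not apply to them. *)
lemma sets_pair_borel_open:
  fixes A :: "('a::topological_space \<times> 'b::second_countable_topology) set"
  assumes "open A"
  shows "A \<in> sets (borel \<Otimes>\<^sub>M borel)"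
proof -
  obtain B :: "'b set set" where B: "countable B" "topological_basis B"
    using ex_countable_basis by blast
  define U where "U b = \<Union>{V. open V \<and> V \<times> b \<subseteq> A}" for b
  have "A \<subseteq> (\<Union>b\<in>B. U b \<times> b)"
  proof (rule subrelI)
    fix x y assume "(x, y) \<in> A"
    then obtain V W where VW: "open V" "open W" "(x, y) \<in> V \<times> W" "V \<times> W \<subseteq> A"
      by (rule open_prod_elim[OF assms])
    moreover obtain b where "b \<in> B" "y \<in> b" "b \<subseteq> W"
      using topological_basisE[OF B(2) VW(2)] VW(3) by blast
    ultimately show "(x, y) \<in> (\<Union>b\<in>B. U b \<times> b)"
      unfolding U_def by blast
  qed
  then have "A = (\<Union>b\<in>B. U b \<times> b)"
    by (auto simp: U_def)
  moreover have "U b \<times> b \<in> sets (borel \<Otimes>\<^sub>M borel)" if "b \<in> B" for b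
    using that B(2) by (intro pair_measureI borel_open) (auto simp: U_def topological_basis_open)
  ultimately show ?thesis
    using B(1) by (auto intro!: sets.countable_UN')
qed

lemma borel_measurable_pair_continuous_onI:
  fixes f :: "'a::topological_space \<times> 'b::second_countable_topology \<Rightarrow> 'c::topological_space"
  assumes "continuous_on UNIV f"
  shows "f \<in> borel \<Otimes>\<^sub>M borel \<rightarrow>\<^sub>M borel"
proof (rule borel_measurableI)
  fix S :: "'c set" assume "open S"
  then have "open (f -` S)" using assms by (simp add: continuous_on_open_vimage)
  then show "f -` S \<inter> space (borel \<Otimes>\<^sub>M borel) \<in> sets (borel \<Otimes>\<^sub>M borel)"
    by (simp add: sets_pair_borel_open space_pair_measure)
qed

definition kernel_product :: "'a measure \<Rightarrow> 'b measure \<Rightarrow> ('a \<Rightarrow> 'b measure) \<Rightarrow> ('a \<times> 'b) measure"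
  where "kernel_product M N \<kappa> = M \<bind> (\<lambda>x. distr (\<kappa> x) (M \<Otimes>\<^sub>M N) (Pair x))"

lemma measurable_distr_Pair:
  assumes "\<kappa> \<in> M \<rightarrow>\<^sub>M subprob_algebra N"
  shows "(\<lambda>x. distr (\<kappa> x) (M \<Otimes>\<^sub>M N) (Pair x)) \<in> M \<rightarrow>\<^sub>M subprob_algebra (M \<Otimes>\<^sub>M N)"
  by (rule measurable_distr2[OF _ assms]) simp

lemma
  assumes \<kappa>: "\<kappa> \<in> M \<rightarrow>\<^sub>M prob_algebra N" and M: "prob_space M"
  shows prob_space_kernel_product: "prob_space (kernel_product M N \<kappa>)"
    and sets_kernel_product: "sets (kernel_product M N \<kappa>) = sets (M \<Otimes>\<^sub>M N)"
proof -
  have \<kappa>_sub: "\<kappa> \<in> M \<rightarrow>\<^sub>M subprob_algebra N"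
    by (rule measurable_prob_algebraD[OF \<kappa>])
  have "prob_space (distr (\<kappa> x) (M \<Otimes>\<^sub>M N) (Pair x))" if "x \<in> space M" for x
  proof -
    have "prob_space (\<kappa> x)" "sets (\<kappa> x) = sets N"
      using measurable_space[OF \<kappa> that] by (simp_all add: space_prob_algebra)
    with that show ?thesis
      by (intro prob_space.prob_space_distr) (auto cong: measurable_cong_sets)
  qed
  then show "prob_space (kernel_product M N \<kappa>)"
    unfolding kernel_product_def
    by (rule prob_space.prob_space_bind[OF M AE_I2 measurable_distr_Pair[OF \<kappa>_sub]])
  show "sets (kernel_product M N \<kappa>) = sets (M \<Otimes>\<^sub>M N)"
    unfolding kernel_product_def
    by (rule sets_bind_measurable[OF measurable_distr_Pair[OF \<kappa>_sub] prob_space.not_empty[OF M]])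
qed

lemma distr_kernel_product_fst:
  assumes \<kappa>: "\<kappa> \<in> M \<rightarrow>\<^sub>M prob_algebra N" and "space M \<noteq> {}"
  shows "distr (kernel_product M N \<kappa>) M fst = M"
proof -
  have "distr (kernel_product M N \<kappa>) M fst
      = M \<bind> (\<lambda>x. distr (distr (\<kappa> x) (M \<Otimes>\<^sub>M N) (Pair x)) M fst)"
    unfolding kernel_product_def
    by (rule distr_bind[OF measurable_distr_Pair[OF measurable_prob_algebraD[OF \<kappa>]] assms(2)]) simp
  also have "\<dots> = M \<bind> return M"
  proof (rule bind_cong[OF refl])
    fix x assume x: "x \<in> space M"
    have "prob_space (\<kappa> x)" "sets (\<kappa> x) = sets N"
      using measurable_space[OF \<kappa> x] by (simp_all add: space_prob_algebra)
    with x show "distr (distr (\<kappa> x) (M \<Otimes>\<^sub>M N) (Pair x)) M fst = return M x"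
      by (subst distr_distr) (auto simp: comp_def prob_space.distr_const cong: measurable_cong_sets)
  qed
  also have "\<dots> = M"
    by (rule bind_return'') simp
  finally show ?thesis .
qed

lemma distr_kernel_product_map_prod:
  assumes f: "f \<in> M \<rightarrow>\<^sub>M L" and \<kappa>: "\<kappa> \<in> L \<rightarrow>\<^sub>M prob_algebra N" and "space M \<noteq> {}"
  shows "distr (kernel_product M N (\<lambda>x. \<kappa> (f x))) (L \<Otimes>\<^sub>M N) (map_prod f id)
    = kernel_product (distr M L f) N \<kappa>"
proof -
  have \<kappa>_sub: "\<kappa> \<in> L \<rightarrow>\<^sub>M subprob_algebra N"
    by (rule measurable_prob_algebraD[OF \<kappa>])
  have "(\<lambda>p. (f (fst p), snd p)) \<in> M \<Otimes>\<^sub>M N \<rightarrow>\<^sub>M L \<Otimes>\<^sub>M N"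
    by (intro measurable_Pair measurable_compose[OF measurable_fst f] measurable_snd)
  then have f_id: "map_prod f id \<in> M \<Otimes>\<^sub>M N \<rightarrow>\<^sub>M L \<Otimes>\<^sub>M N"
    by (simp add: map_prod_def split_beta')
  have "distr (kernel_product M N (\<lambda>x. \<kappa> (f x))) (L \<Otimes>\<^sub>M N) (map_prod f id)
      = M \<bind> (\<lambda>x.
          distr (distr (\<kappa> (f x)) (M \<Otimes>\<^sub>M N) (Pair x)) (L \<Otimes>\<^sub>M N) (map_prod f id))"
    unfolding kernel_product_def
    by (rule distr_bind[OF measurable_distr_Pair assms(3)])
      (auto intro: measurable_compose[OF f \<kappa>_sub] f_id)
  also have "\<dots> = M \<bind> (\<lambda>x. distr (\<kappa> (f x)) (distr M L f \<Otimes>\<^sub>M N) (Pair (f x)))"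
  proof (rule bind_cong[OF refl])
    fix x assume x: "x \<in> space M"
    have "sets (\<kappa> (f x)) = sets N"
      using measurable_space[OF \<kappa> measurable_space[OF f x]] by (simp add: space_prob_algebra)
    with x show "distr (distr (\<kappa> (f x)) (M \<Otimes>\<^sub>M N) (Pair x)) (L \<Otimes>\<^sub>M N) (map_prod f id)
        = distr (\<kappa> (f x)) (distr M L f \<Otimes>\<^sub>M N) (Pair (f x))"
      by (subst distr_distr[OF f_id]) (auto simp: comp_def intro!: distr_cong cong: measurable_cong_sets)
  qed
  also have "\<dots> = kernel_product (distr M L f) N \<kappa>"
  proof -
    have "(\<lambda>y. distr (\<kappa> y) (distr M L f \<Otimes>\<^sub>M N) (Pair y))
        \<in> L \<rightarrow>\<^sub>M subprob_algebra (distr M L f \<Otimes>\<^sub>M N)"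
      by (rule measurable_distr2[OF _ \<kappa>_sub]) (simp cong: measurable_cong_sets)
    then show ?thesis
      unfolding kernel_product_def by (rule bind_distr[OF f _ assms(3), symmetric])
  qed
  finally show ?thesis .
qed

lemma joint_eq_kernel_product:
  fixes \<mu> :: "'a::euclidean_space measure"
  assumes "sets \<mu> = sets borel"
  shows "joint \<mu> \<psi> = kernel_product \<mu> borel \<psi>"
  unfolding joint_def kernel_product_def
proof (intro bind_cong distr_cong refl)
  show "sets (borel :: ('a \<times> 'a) measure) = sets (\<mu> \<Otimes>\<^sub>M borel)"
    by (subst sets_pair_measure_cong[OF assms refl]) (simp only: borel_prod)
qed

lemma parallel_transport_lift_const:
  fixes Q :: "((real \<Rightarrow>\<^sub>C 'a::euclidean_space) \<times> 'a) measure"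
  assumes Q: "prob_space Q" "sets Q = sets (borel \<Otimes>\<^sub>M borel)"
    and marginal: "distr Q borel fst = \<eta>" and curves: "AE w in \<eta>. w \<in> curves01"
    and initial: "distr Q borel (map_prod (ev 0) id) = joint \<mu> \<psi>"
  shows "parallel_transport \<mu> \<psi> \<eta> (distr Q borel (case_prod lift_const))"
proof -
  have lift_meas: "case_prod lift_const \<in> Q \<rightarrow>\<^sub>M borel"
    using borel_measurable_pair_continuous_onI[OF continuous_on_lift_const]
    by (simp add: measurable_cong_sets[OF Q(2) refl])
  have fst_meas: "fst \<in> Q \<rightarrow>\<^sub>M borel"
    by (simp add: measurable_cong_sets[OF Q(2) refl])
  define F where "F = curves01 \<inter> {w :: real \<Rightarrow>\<^sub>C ('a \<times> 'a). \<forall>t. snd (w t) = snd (w 0)}"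
  have F_borel: "F \<in> sets borel"
    unfolding F_def by (intro borel_closed closed_Int closed_curves01 closed_snd_const)
  have "{w \<in> space borel. w \<in> (curves01 :: (real \<Rightarrow>\<^sub>C 'a) set)} \<in> sets borel"
    by (simp add: borel_closed[OF closed_curves01])
  moreover have "AE w in distr Q borel fst. w \<in> curves01"
    using curves unfolding marginal .
  ultimately have "AE p in Q. fst p \<in> curves01"
    using AE_distr_iff[OF fst_meas] by simp
  then have "AE p in Q. case_prod lift_const p \<in> F"
    by eventually_elim (auto simp: F_def)
  then have lift_in_F: "AE w in distr Q borel (case_prod lift_const). w \<in> F"
    by (simp add: AE_distr_iff[OF lift_meas] F_borel)
  show ?thesis
    unfolding parallel_transport_def
  proof (intro conjI)
    show "prob_space (distr Q borel (case_prod lift_const))"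
      by (rule prob_space.prob_space_distr[OF Q(1) lift_meas])
    show "AE w in distr Q borel (case_prod lift_const). w \<in> C1y"
      using lift_in_F by eventually_elim (auto simp: F_def intro: snd_const_imp_C1y_D2_zero)
    show "AE w in distr Q borel (case_prod lift_const). \<forall>t\<in>{0..1}. D2 w t = 0"
      using lift_in_F by eventually_elim (auto simp: F_def dest: snd_const_imp_C1y_D2_zero)
    have "distr (distr Q borel (case_prod lift_const)) borel p1 = distr Q borel fst"
      by (subst distr_distr[OF borel_measurable_continuous_onI[OF continuous_on_p1] lift_meas])
        (auto intro: distr_cong)
    then show "distr (distr Q borel (case_prod lift_const)) borel p1 = \<eta>"
      by (simp add: marginal)
    have "distr (distr Q borel (case_prod lift_const)) borel (ev 0) = distr Q borel (map_prod (ev 0) id)"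
      by (subst distr_distr[OF borel_measurable_continuous_onI[OF continuous_on_ev] lift_meas])
        (auto intro: distr_cong)
    then show "distr (distr Q borel (case_prod lift_const)) borel (ev 0) = joint \<mu> \<psi>"
      by (simp add: initial)
  qed simp
qed

lemma kernel_product_ev0_marginals:
  fixes \<eta> :: "(real \<Rightarrow>\<^sub>C 'a::euclidean_space) measure"
  assumes \<psi>: "\<psi> \<in> borel \<rightarrow>\<^sub>M prob_algebra borel" and \<eta>: "prob_space \<eta>" "sets \<eta> = sets borel"
  defines "Q \<equiv> kernel_product \<eta> borel (\<lambda>w. \<psi> (ev 0 w))"
  shows "prob_space Q" and "sets Q = sets (borel \<Otimes>\<^sub>M borel)" and "distr Q borel fst = \<eta>"
    and "distr Q borel (map_prod (ev 0) id) = joint (distr \<eta> borel (ev 0)) \<psi>"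
proof -
  have ev0: "ev 0 \<in> \<eta> \<rightarrow>\<^sub>M borel"
    using borel_measurable_continuous_onI[OF continuous_on_ev] by (simp add: measurable_cong_sets[OF \<eta>(2) refl])
  have \<kappa>: "(\<lambda>w. \<psi> (ev 0 w)) \<in> \<eta> \<rightarrow>\<^sub>M prob_algebra borel"
    by (rule measurable_compose[OF ev0 \<psi>])
  have nonempty: "space \<eta> \<noteq> {}"
    by (rule prob_space.not_empty[OF \<eta>(1)])
  show "prob_space Q"
    unfolding Q_def by (rule prob_space_kernel_product[OF \<kappa> \<eta>(1)])
  show "sets Q = sets (borel \<Otimes>\<^sub>M borel)"
    unfolding Q_def sets_kernel_product[OF \<kappa> \<eta>(1)] by (rule sets_pair_measure_cong[OF \<eta>(2) refl])
  have "distr Q borel fst = distr Q \<eta> fst"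
    by (rule distr_cong) (simp_all add: \<eta>(2))
  also have "\<dots> = \<eta>"
    unfolding Q_def by (rule distr_kernel_product_fst[OF \<kappa> nonempty])
  finally show "distr Q borel fst = \<eta>" .
  have "distr Q borel (map_prod (ev 0) id) = distr Q (borel \<Otimes>\<^sub>M borel) (map_prod (ev 0) id)"
    by (simp add: borel_prod)
  also have "\<dots> = kernel_product (distr \<eta> borel (ev 0)) borel \<psi>"
    unfolding Q_def by (rule distr_kernel_product_map_prod[OF ev0 \<psi> nonempty])
  also have "\<dots> = joint (distr \<eta> borel (ev 0)) \<psi>"
    by (rule joint_eq_kernel_product[symmetric]) simp
  finally show "distr Q borel (map_prod (ev 0) id) = joint (distr \<eta> borel (ev 0)) \<psi>" .
qed

theorem mainTheorem2:
  fixes \<mu> :: "'a::euclidean_space measure"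
    and \<psi> :: "'a \<Rightarrow> 'a measure"
    and \<eta> :: "(real \<Rightarrow>\<^sub>C 'a) measure"
  assumes "P2 \<mu>"
    and "tangent \<mu> \<psi>"
    and "prob_space \<eta>" and "sets \<eta> = sets borel" and "AE w in \<eta>. w \<in> curves01"
    and "distr \<eta> borel (ev 0) = \<mu>"
  shows "\<exists>\<Psi>. parallel_transport \<mu> \<psi> \<eta> \<Psi>"
proof -
  have \<psi>: "\<psi> \<in> borel \<rightarrow>\<^sub>M prob_algebra borel"
    using assms(2) unfolding tangent_def by blast
  note Q = kernel_product_ev0_marginals[OF \<psi> assms(3,4)]
  have "parallel_transport \<mu> \<psi> \<eta>
      (distr (kernel_product \<eta> borel (\<lambda>w. \<psi> (ev 0 w))) borel (case_prod lift_const))"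
    by (rule parallel_transport_lift_const[OF Q(1-3) assms(5)]) (use Q(4) assms(6) in simp)
  then show ?thesis by blast
qed

end
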